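(* $\mathcal{TC}(\mathrm{RL}_1^P)\subsetneq\mathcal{TC}(\mathrm{RL}_2^P)$.
   Context: A right-linear grammar is $G=(N,T,P,S)$ with rules $A\to wB$ or $A\to w$ ($A,B\in N$, $w\in T^*$). For a regular language $L$, $\mathrm{Prod}_{RL}(L)$ is the minimum of $|P|$ over all right-linear grammars generating $L$, and $\mathrm{RL}_n^P=\{L\text{ regular}:\mathrm{Prod}_{RL}(L)\le n\}$. A tree-controlled grammar is a quintuple $G=(N,T,P,S,R)$ where $(N,T,P,S)$ is a context-free grammar whose rules are all non-erasing, except that $S\to\lambda$ is allowed if $S$ does not occur on the right-hand side of any rule, and $R\subseteq (N\cup T)^*$ is a regular control language. The word of level $j$ of a derivation tree is the word of all nodes of depth $j$ read left to right. $L(G)$ consists of all $z\in T^*$ having a derivation tree with yield $z$ such that the words of all levels except the last belong to $R$. For a family $\mathcal F$ of regular languages, $\mathcal{TC}(\mathcal F)$ is the family of languages generated by tree-controlled grammars with control language in $\mathcal F$. *)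

theory Defs
  imports Main
begin

(* Symbols (terminals and nonterminals of all grammars) are natural numbers:
   an infinite supply of symbols, as is standard for language families. *)

(* rule (A, w, Some B) is A -> wB ; rule (A, w, None) is A -> w *)
record rlg =
  rN :: "nat set"
  rT :: "nat set"
  rP :: "(nat \<times> nat list \<times> nat option) set"
  rS :: nat

definition rl_wf :: "rlg \<Rightarrow> bool" where
  "rl_wf G \<longleftrightarrow> finite (rN G) \<and> finite (rT G) \<and> finite (rP G) \<and>
     rN G \<inter> rT G = {} \<and> rS G \<in> rN G \<and>
     (\<forall>(A, w, B) \<in> rP G. A \<in> rN G \<and> set w \<subseteq> rT G \<and>
        (\<forall>X. B = Some X \<longrightarrow> X \<in> rN G))"

inductive rl_gen :: "rlg \<Rightarrow> nat \<Rightarrow> nat list \<Rightarrow> bool" for G where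
  term_rule: "(A, w, None) \<in> rP G \<Longrightarrow> rl_gen G A w"
| cont_rule: "(A, u, Some B) \<in> rP G \<Longrightarrow> rl_gen G B v \<Longrightarrow> rl_gen G A (u @ v)"

definition rl_lang :: "rlg \<Rightarrow> nat list set" where
  "rl_lang G = {w. rl_gen G (rS G) w}"

definition RLP :: "nat \<Rightarrow> nat list set set" where
  "RLP n = {L. \<exists>G. rl_wf G \<and> card (rP G) \<le> n \<and> rl_lang G = L}"

record cfg =
  cN :: "nat set"
  cT :: "nat set"
  cP :: "(nat \<times> nat list) set"
  cS :: nat

definition tc_wf :: "cfg \<Rightarrow> nat list set \<Rightarrow> bool" where
  "tc_wf G R \<longleftrightarrow> finite (cN G) \<and> finite (cT G) \<and> finite (cP G) \<and>
     cN G \<inter> cT G = {} \<and> cS G \<in> cN G \<and>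
     (\<forall>(A, \<alpha>) \<in> cP G. A \<in> cN G \<and> set \<alpha> \<subseteq> cN G \<union> cT G) \<and>
     (\<forall>(A, \<alpha>) \<in> cP G. \<alpha> = [] \<longrightarrow>
        A = cS G \<and> (\<forall>(B, \<beta>) \<in> cP G. cS G \<notin> set \<beta>)) \<and>
     R \<subseteq> lists (cN G \<union> cT G)"

(* derivation trees: terminal leaves, a lambda-leaf (for S -> lambda), inner nodes *)
datatype dtree = Lf nat | Eps | Nd nat "dtree list"

fun root :: "dtree \<Rightarrow> nat" where
  "root (Lf a) = a"
| "root Eps = undefined"
| "root (Nd A ts) = A"

inductive is_dtree :: "cfg \<Rightarrow> dtree \<Rightarrow> bool" for G where
  leaf: "a \<in> cT G \<Longrightarrow> is_dtree G (Lf a)"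
| inner: "(A, map root ts) \<in> cP G \<Longrightarrow> ts \<noteq> [] \<Longrightarrow> \<forall>t \<in> set ts. is_dtree G t
          \<Longrightarrow> is_dtree G (Nd A ts)"
| eps: "(A, []) \<in> cP G \<Longrightarrow> is_dtree G (Nd A [Eps])"

fun yield :: "dtree \<Rightarrow> nat list" where
  "yield (Lf a) = [a]"
| "yield Eps = []"
| "yield (Nd A ts) = concat (map yield ts)"

fun height :: "dtree \<Rightarrow> nat" where
  "height (Lf a) = 0"
| "height Eps = 0"
| "height (Nd A ts) = Suc (fold max (map height ts) 0)"

fun level :: "dtree \<Rightarrow> nat \<Rightarrow> nat list" where
  "level (Lf a) j = (if j = 0 then [a] else [])"
| "level Eps j = []"
| "level (Nd A ts) j = (if j = 0 then [A] else concat (map (\<lambda>t. level t (j - 1)) ts))"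

definition tc_lang :: "cfg \<Rightarrow> nat list set \<Rightarrow> nat list set" where
  "tc_lang G R = {yield t | t. is_dtree G t \<and> root t = cS G \<and>
                     (\<forall>j < height t. level t j \<in> R)}"

definition TC :: "nat list set set \<Rightarrow> nat list set set" where
  "TC F = {L. \<exists>G R. tc_wf G R \<and> R \<in> F \<and> L = tc_lang G R}"

end

theory Submission
  imports Defs
begin

(* A right-linear grammar with a single production generates at most one word: a derivation
   using a continuing production A -> uB must end with a terminating one, i.e. needs two
   productions.  So a control language from RL_1^P is at most a singleton {w}.  Level 0 of a
   tree is the axiom S, whence w = S and every level except the last is the single symbol S.
   Such a tree is a chain of unit steps ending in one production, so its yield is the right-hand
   side of a production, and every language of TC(RL_1^P) is finite.  With two productions the
   control language {S, aS} together with S -> aS | a generates the infinite language a^+. *)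

lemma RLP_mono: "m \<le> n \<Longrightarrow> RLP m \<subseteq> RLP n"
  unfolding RLP_def by auto

lemma TC_mono: "F \<subseteq> F' \<Longrightarrow> TC F \<subseteq> TC F'"
  unfolding TC_def by blast

lemma rl_gen_single_production:
  assumes "rl_gen G A w" "finite (rP G)" "card (rP G) \<le> 1"
  shows "(A, w, None) \<in> rP G"
  using assms
proof (induction rule: rl_gen.induct)
  case (term_rule A w)
  then show ?case by simp
next
  case (cont_rule A u B v)
  then have "(A, u, Some B) = (B, v, None)"
    using card_le_Suc0_iff_eq by (metis One_nat_def)
  then show ?case by simp
qed

lemma RLP_1_subsingleton:
  assumes "R \<in> RLP 1"
  shows "\<exists>w. R \<subseteq> {w}"
proof -
  obtain G where G: "rl_wf G" "card (rP G) \<le> 1" "rl_lang G = R"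
    using assms unfolding RLP_def by auto
  have fin: "finite (rP G)"
    using G(1) unfolding rl_wf_def by auto
  have "(rS G, x, None) \<in> rP G" if "x \<in> R" for x
    using that G(2,3) rl_gen_single_production[OF _ fin] unfolding rl_lang_def by blast
  then have "x = y" if "x \<in> R" "y \<in> R" for x y
    using that G(2) card_le_Suc0_iff_eq[OF fin] by (metis One_nat_def prod.inject)
  then show ?thesis
    by blast
qed

lemma height_child_less:
  assumes "t \<in> set ts"
  shows "height t < height (Nd A ts)"
proof -
  have "height t \<le> Max (set (0 # map height ts))"
    using assms by (intro Max_ge) auto
  then show ?thesis
    by (simp only: Max.set_eq_fold height.simps less_Suc_eq_le)
qed

lemma dtree_height_0D:
  "is_dtree G t \<Longrightarrow> height t = 0 \<Longrightarrow> root t \<in> cT G \<and> yield t = [root t]"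
  by (erule is_dtree.cases) auto

lemma dtree_level_0: "is_dtree G t \<Longrightarrow> level t 0 = [root t]"
  by (erule is_dtree.cases) auto

lemma dtree_level_1:
  "\<forall>t \<in> set ts. is_dtree G t \<Longrightarrow> level (Nd A ts) 1 = map root ts"
  by (induction ts) (auto simp: dtree_level_0)

lemma yield_chain_dtree_in_rhs:
  assumes "is_dtree G t" "0 < height t" "\<forall>j < height t. length (level t j) = 1"
  shows "yield t \<in> snd ` cP G"
  using assms
proof (induction rule: is_dtree.induct)
  case (leaf a)
  then show ?case by simp
next
  case (eps A)
  then show ?case by force
next
  case (inner A ts)
  show ?case
  proof (cases "height (Nd A ts) = 1")
    case True
    then have "yield c = [root c]" if "c \<in> set ts" for c
      using that inner.IH height_child_less[OF that, of A] dtree_height_0D by force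
    then have "yield (Nd A ts) = map root ts"
      by (induction ts) auto
    then show ?thesis
      using inner.hyps(1) by force
  next
    case False
    then have "length (level (Nd A ts) 1) = 1"
      using inner.prems by (metis less_one nat_neq_iff)
    then obtain c where ts: "ts = [c]"
      using dtree_level_1[of ts G A] inner.IH by (auto simp: length_Suc_conv)
    have "0 < height c" "\<forall>j < height c. length (level c j) = 1"
      using False inner.prems(2) by (auto simp: ts)
    then have "yield c \<in> snd ` cP G"
      using inner.IH ts by simp
    then show ?thesis
      by (simp add: ts)
  qed
qed

lemma tc_lang_subsingleton_control:
  assumes "tc_wf G R" "R \<subseteq> {w}"
  shows "tc_lang G R \<subseteq> snd ` cP G"
proof
  fix z
  assume "z \<in> tc_lang G R"
  then obtain t where t: "z = yield t" "is_dtree G t" "root t = cS G"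
    "\<forall>j < height t. level t j \<in> R"
    unfolding tc_lang_def by auto
  have "cS G \<notin> cT G"
    using assms(1) unfolding tc_wf_def by auto
  then have "0 < height t"
    using dtree_height_0D[OF t(2)] t(3) by (metis gr0I)
  then have "w = [cS G]"
    using t(4) assms(2) dtree_level_0[OF t(2)] t(3) by force
  then have "\<forall>j < height t. length (level t j) = 1"
    using t(4) assms(2) by auto
  then show "z \<in> snd ` cP G"
    using yield_chain_dtree_in_rhs t(1,2) \<open>0 < height t\<close> by blast
qed

lemma TC_RLP_1_finite:
  assumes "L \<in> TC (RLP 1)"
  shows "finite L"
proof -
  obtain G R where GR: "tc_wf G R" "R \<in> RLP 1" "L = tc_lang G R"
    using assms unfolding TC_def by auto
  obtain w where "R \<subseteq> {w}"
    using RLP_1_subsingleton GR(2) by blast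
  then have "L \<subseteq> snd ` cP G"
    using tc_lang_subsingleton_control GR(1,3) by blast
  moreover have "finite (cP G)"
    using GR(1) unfolding tc_wf_def by auto
  ultimately show ?thesis
    using finite_subset by blast
qed

definition a_plus_cfg :: cfg where
  "a_plus_cfg = \<lparr>cN = {0}, cT = {1}, cP = {(0, [1, 0]), (0, [1])}, cS = 0\<rparr>"

definition a_plus_control :: "nat list set" where
  "a_plus_control = {[0], [1, 0]}"

lemma a_plus_control_RLP_2: "a_plus_control \<in> RLP 2"
proof -
  define H where "H = \<lparr>rN = {2}, rT = {0, 1}, rP = {(2, [0], None), (2, [1, 0], None)}, rS = 2\<rparr>"
  have "rl_lang H = a_plus_control"
  proof
    show "rl_lang H \<subseteq> a_plus_control"
      unfolding rl_lang_def
      by (auto elim: rl_gen.cases simp: H_def a_plus_control_def)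
    show "a_plus_control \<subseteq> rl_lang H"
      unfolding a_plus_control_def rl_lang_def
      by (auto intro: rl_gen.term_rule simp: H_def)
  qed
  moreover have "rl_wf H" "card (rP H) \<le> 2"
    by (auto simp: rl_wf_def H_def)
  ultimately show ?thesis
    unfolding RLP_def by blast
qed

lemma a_plus_in_TC_RLP_2: "tc_lang a_plus_cfg a_plus_control \<in> TC (RLP 2)"
proof -
  have "tc_wf a_plus_cfg a_plus_control"
    by (auto simp: tc_wf_def a_plus_cfg_def a_plus_control_def)
  then show ?thesis
    using a_plus_control_RLP_2 unfolding TC_def by blast
qed

primrec comb_tree :: "nat \<Rightarrow> dtree" where
  "comb_tree 0 = Nd 0 [Lf 1]"
| "comb_tree (Suc n) = Nd 0 [Lf 1, comb_tree n]"

lemma root_comb_tree: "root (comb_tree n) = 0"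
  by (cases n) auto

lemma height_comb_tree: "height (comb_tree n) = Suc n"
  by (induction n) auto

lemma yield_comb_tree: "yield (comb_tree n) = replicate (Suc n) 1"
  by (induction n) auto

lemma comb_tree_dtree: "is_dtree a_plus_cfg (comb_tree n)"
  by (induction n)
    (auto intro!: is_dtree.inner is_dtree.leaf simp: a_plus_cfg_def root_comb_tree)

lemma level_comb_tree: "j \<le> n \<Longrightarrow> level (comb_tree n) j \<in> a_plus_control"
proof (induction n arbitrary: j)
  case 0
  then show ?case by (simp add: a_plus_control_def)
next
  case (Suc n)
  then show ?case
    by (cases j; cases "j - 1")
      (auto simp: a_plus_control_def dtree_level_0[OF comb_tree_dtree] root_comb_tree)
qed

lemma comb_tree_yield_in_a_plus: "yield (comb_tree n) \<in> tc_lang a_plus_cfg a_plus_control"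
proof -
  have "\<forall>j < height (comb_tree n). level (comb_tree n) j \<in> a_plus_control"
    using level_comb_tree by (simp add: height_comb_tree less_Suc_eq_le)
  moreover have "root (comb_tree n) = cS a_plus_cfg"
    by (simp add: a_plus_cfg_def root_comb_tree)
  ultimately show ?thesis
    unfolding tc_lang_def using comb_tree_dtree by blast
qed

lemma a_plus_tc_lang_infinite: "infinite (tc_lang a_plus_cfg a_plus_control)"
proof -
  have "inj (\<lambda>n. yield (comb_tree n))"
    by (rule injI) (simp add: yield_comb_tree)
  then show ?thesis
    using comb_tree_yield_in_a_plus infinite_iff_countable_subset by blast
qed

theorem mainTheorem6:
  shows "TC (RLP 1) \<subset> TC (RLP 2)"
proof -
  have "TC (RLP 1) \<subseteq> TC (RLP 2)"
    by (simp add: TC_mono RLP_mono)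
  moreover have "tc_lang a_plus_cfg a_plus_control \<notin> TC (RLP 1)"
    using TC_RLP_1_finite a_plus_tc_lang_infinite by blast
  ultimately show ?thesis
    using a_plus_in_TC_RLP_2 by blast
qed

end
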